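(* Let $G_n\sim \mathrm{CM}_n(\bar d^{(n)})$ satisfy the convergence assumption (CA) towards a limiting degree distribution $(p_k)_{k\ge0}$ with mean $0<\lambda<\infty$ and criticality parameter $0<\nu<1$, and suppose there exists $\gamma>0$ with $p_k=\mathcal{O}(e^{-\gamma k})$. Let $B_n$ be the number of vertices of $G_n$ that lie in connected components which are not trees. Then for every $0<\alpha<1$, $B_n=\mathcal{O}_{\mathbb{P}}(n^{\alpha})$.
   Context: Configuration model: given a degree sequence $\bar d^{(n)}=(d_1,\dots,d_n)\in\mathbb{N}_0^n$ (deterministic or i.i.d.), assign $d_v$ half-edges to vertex $v$ and pair all half-edges uniformly at random; matched pairs become edges (self-loops and multi-edges allowed; a component containing a self-loop or multi-edge is not a tree). Its law is $\mathrm{CM}_n(\bar d^{(n)})$. Let $D^{(n)}$ be the degree of a uniformly chosen vertex. Convergence assumption (CA): $D^{(n)}\to D$ in distribution and $\mathbb{E}((D^{(n)})^2)\to\mathbb{E}(D^2)<\infty$, where $D$ has law $(p_k)$. $\lambda=\mathbb{E}D$ and $\nu=\mathbb{E}(D(D-1))/\mathbb{E}(D)$. $X_n=\mathcal{O}_{\mathbb{P}}(f_n)$ means: for every $\epsilon>0$ there exist $M,N$ with $\mathbb{P}(|X_n/f_n|>M)<\epsilon$ for $n\ge N$. *)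

theory Defs
  imports "HOL-Probability.Probability" "HOL-Library.Landau_Symbols"
begin

definition half_edges :: "nat \<Rightarrow> (nat \<Rightarrow> nat) \<Rightarrow> (nat \<times> nat) set" where
  "half_edges n d = {(v,i). v < n \<and> i < d v}"

definition perfect_matchings :: "(nat \<times> nat) set \<Rightarrow> ((nat \<times> nat) \<Rightarrow> (nat \<times> nat)) set" where
  "perfect_matchings H = {m. (\<forall>h\<in>H. m h \<in> H \<and> m h \<noteq> h \<and> m (m h) = h) \<and> (\<forall>h. h \<notin> H \<longrightarrow> m h = h)}"

definition CM :: "nat \<Rightarrow> (nat \<Rightarrow> nat) \<Rightarrow> ((nat \<times> nat) \<Rightarrow> (nat \<times> nat)) pmf" where
  "CM n d = pmf_of_set (perfect_matchings (half_edges n d))"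

definition adj :: "nat \<Rightarrow> (nat \<Rightarrow> nat) \<Rightarrow> ((nat \<times> nat) \<Rightarrow> (nat \<times> nat)) \<Rightarrow> (nat \<times> nat) set" where
  "adj n d m = {(v,w). \<exists>i j. (v,i) \<in> half_edges n d \<and> m (v,i) = (w,j)}"

definition component :: "nat \<Rightarrow> (nat \<Rightarrow> nat) \<Rightarrow> ((nat \<times> nat) \<Rightarrow> (nat \<times> nat)) \<Rightarrow> nat \<Rightarrow> nat set" where
  "component n d m v = {w. (v,w) \<in> (adj n d m)\<^sup>*}"

text \<open>Edges with an endpoint in C (each edge = unordered pair of matched half-edges;
  self-loops and multi-edges counted separately).\<close>

definition edges_in :: "nat \<Rightarrow> (nat \<Rightarrow> nat) \<Rightarrow> ((nat \<times> nat) \<Rightarrow> (nat \<times> nat)) \<Rightarrow> nat set \<Rightarrow> (nat \<times> nat) set set" where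
  "edges_in n d m C = {{h, m h} | h. h \<in> half_edges n d \<and> fst h \<in> C}"

text \<open>A connected component of a multigraph is a tree iff it has exactly |C| - 1 edges
  (a self-loop or a multi-edge forces more edges).\<close>

definition is_tree_component :: "nat \<Rightarrow> (nat \<Rightarrow> nat) \<Rightarrow> ((nat \<times> nat) \<Rightarrow> (nat \<times> nat)) \<Rightarrow> nat set \<Rightarrow> bool" where
  "is_tree_component n d m C \<longleftrightarrow> card (edges_in n d m C) + 1 = card C"

definition B :: "nat \<Rightarrow> (nat \<Rightarrow> nat) \<Rightarrow> ((nat \<times> nat) \<Rightarrow> (nat \<times> nat)) \<Rightarrow> nat" where
  "B n d m = card {v. v < n \<and> \<not> is_tree_component n d m (component n d m v)}"

end

theory Submission
  imports Defs "HOL-Real_Asymp.Real_Asymp"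
begin

(* Explore the component of a vertex v along paths that enter each new vertex through one
   half-edge and leave it through another. If the component is not a tree, some such path from v
   has its last half-edge matched back into a vertex it has already visited: walk down a
   breadth-first search tree to an edge outside the tree, then climb the tree again.

   A fixed list of k + 1 disjoint pairs of half-edges lies in a uniform matching of l half-edges
   with probability (l - 2k - 3)!! / (l - 1)!!, and there are at most d_v F (F - 2) ... (F - 2k + 2)
   paths of length k from v, where F = sum_u d_u (d_u - 1). Subcriticality (nu < 1) gives
   F <= rho (l - 3) for some rho < 1 and all large n, so the resulting probabilities are
   geometric in k. Paths closing at a vertex of degree at most T contribute at most
   l T / ((l - 1) (1 - rho)^2) to the expected number of vertices in non-tree components; any other
   non-tree component contains a cycle through a vertex w of degree above T, which happens with
   probability at most sum_{d_w > T} d_w^2 / ((l - 1) (1 - rho)), uniformly small for large T by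
   the convergence of the second moments. *)

lemma half_edges_Sigma: "half_edges n d = Sigma {..<n} (\<lambda>v. {..<d v})"
  unfolding half_edges_def by auto

lemma finite_half_edges [simp]: "finite (half_edges n d)"
  unfolding half_edges_Sigma by simp

lemma card_half_edges: "card (half_edges n d) = (\<Sum>v<n. d v)"
  unfolding half_edges_Sigma by (simp add: card_SigmaI)

lemma mem_half_edges: "h \<in> half_edges n d \<longleftrightarrow> fst h < n \<and> snd h < d (fst h)"
  unfolding half_edges_def by (cases h) simp

section \<open>Counting perfect matchings\<close>

lemma perfect_matchingsD:
  assumes "m \<in> perfect_matchings H"
  shows "h \<in> H \<Longrightarrow> m h \<in> H" "h \<in> H \<Longrightarrow> m h \<noteq> h" "h \<in> H \<Longrightarrow> m (m h) = h"
    "h \<notin> H \<Longrightarrow> m h = h"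
  using assms unfolding perfect_matchings_def by blast+

lemma perfect_matchingsI:
  "(\<And>h. h \<in> H \<Longrightarrow> m h \<in> H \<and> m h \<noteq> h \<and> m (m h) = h) \<Longrightarrow> (\<And>h. h \<notin> H \<Longrightarrow> m h = h)
   \<Longrightarrow> m \<in> perfect_matchings H"
  unfolding perfect_matchings_def by blast

lemma finite_perfect_matchings:
  assumes "finite H"
  shows "finite (perfect_matchings H)"
proof -
  have "inj_on (\<lambda>m. restrict m H) (perfect_matchings H)"
  proof (rule inj_onI)
    fix m m' assume "m \<in> perfect_matchings H" "m' \<in> perfect_matchings H"
      and "restrict m H = restrict m' H"
    then show "m = m'"
      by (intro ext) (metis perfect_matchingsD(4) restrict_apply')
  qed
  moreover have "(\<lambda>m. restrict m H) ` perfect_matchings H \<subseteq> PiE H (\<lambda>_. H)"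
    by (auto simp: perfect_matchings_def)
  ultimately show ?thesis
    using assms finite_subset finite_PiE[of H "\<lambda>_. H"] by (blast intro: finite_imageD)
qed

lemma perfect_matchings_remove_pair:
  assumes m: "m \<in> perfect_matchings H" and "a \<in> H" "m a = b"
  shows "m(a:=a, b:=b) \<in> perfect_matchings (H - {a,b})"
proof (rule perfect_matchingsI)
  have mb: "m b = a" using perfect_matchingsD(3)[OF m \<open>a \<in> H\<close>] \<open>m a = b\<close> by simp
  fix h assume h: "h \<in> H - {a,b}"
  have "m (m h) = h" using h perfect_matchingsD(3)[OF m] by blast
  then have "m h \<noteq> a" "m h \<noteq> b" using h \<open>m a = b\<close> mb by auto
  then show "(m(a:=a, b:=b)) h \<in> H - {a,b} \<and> (m(a:=a, b:=b)) h \<noteq> h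
      \<and> (m(a:=a, b:=b)) ((m(a:=a, b:=b)) h) = h"
    using h perfect_matchingsD(1-3)[OF m] by simp
next
  fix h assume "h \<notin> H - {a,b}"
  then show "(m(a:=a, b:=b)) h = h"
    using perfect_matchingsD(4)[OF m, of h] by (cases "h = a \<or> h = b") auto
qed

lemma perfect_matchings_add_pair:
  assumes m: "m \<in> perfect_matchings (H - {a,b})" and "a \<in> H" "b \<in> H" "a \<noteq> b"
  shows "m(a:=b, b:=a) \<in> perfect_matchings H"
proof (rule perfect_matchingsI)
  fix h assume "h \<in> H"
  then show "(m(a:=b, b:=a)) h \<in> H \<and> (m(a:=b, b:=a)) h \<noteq> h \<and> (m(a:=b, b:=a)) ((m(a:=b, b:=a)) h) = h"
    using assms perfect_matchingsD(1-3)[OF m, of h] by auto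
next
  fix h assume "h \<notin> H"
  then show "(m(a:=b, b:=a)) h = h"
    using assms perfect_matchingsD(4)[OF m, of h] by auto
qed

lemma card_perfect_matchings_pair:
  assumes ab: "a \<in> H" "b \<in> H" "a \<noteq> b"
    and Q: "\<And>m m'. (\<And>x. x \<noteq> a \<Longrightarrow> x \<noteq> b \<Longrightarrow> m x = m' x) \<Longrightarrow> Q m = Q m'"
  shows "card {m \<in> perfect_matchings H. m a = b \<and> Q m} = card {m \<in> perfect_matchings (H - {a,b}). Q m}"
proof (rule bij_betw_same_card[of "\<lambda>m. m(a:=a, b:=b)"],
       rule bij_betwI[where g = "\<lambda>m. m(a:=b, b:=a)"])
  show "(\<lambda>m. m(a:=a, b:=b)) \<in> {m \<in> perfect_matchings H. m a = b \<and> Q m}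
          \<rightarrow> {m \<in> perfect_matchings (H - {a,b}). Q m}"
  proof
    fix m assume "m \<in> {m \<in> perfect_matchings H. m a = b \<and> Q m}"
    then show "m(a:=a, b:=b) \<in> {m \<in> perfect_matchings (H - {a,b}). Q m}"
      using perfect_matchings_remove_pair[OF _ ab(1), of m] Q[of "m(a:=a, b:=b)" m] by auto
  qed
  show "(\<lambda>m. m(a:=b, b:=a)) \<in> {m \<in> perfect_matchings (H - {a,b}). Q m}
          \<rightarrow> {m \<in> perfect_matchings H. m a = b \<and> Q m}"
  proof
    fix m assume "m \<in> {m \<in> perfect_matchings (H - {a,b}). Q m}"
    then show "m(a:=b, b:=a) \<in> {m \<in> perfect_matchings H. m a = b \<and> Q m}"
      using perfect_matchings_add_pair[OF _ ab, of m] Q[of "m(a:=b, b:=a)" m] ab(3) by auto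
  qed
  show "m(a:=a, b:=b, a:=b, b:=a) = m" if "m \<in> {m \<in> perfect_matchings H. m a = b \<and> Q m}" for m
    using that perfect_matchingsD(3)[of m H a] ab by (auto simp: fun_eq_iff)
  show "m(a:=b, b:=a, a:=a, b:=b) = m" if "m \<in> {m \<in> perfect_matchings (H - {a,b}). Q m}" for m
    using that perfect_matchingsD(4)[of m "H - {a,b}"] by (auto simp: fun_eq_iff)
qed

fun matchings_count :: "nat \<Rightarrow> nat" where
  "matchings_count 0 = 1"
| "matchings_count (Suc 0) = 0"
| "matchings_count (Suc (Suc k)) = Suc k * matchings_count k"

lemma matchings_count_pos: "even k \<Longrightarrow> 0 < matchings_count k"
  by (induction k rule: matchings_count.induct) auto

lemma matchings_count_rec: "2 \<le> k \<Longrightarrow> matchings_count k = (k - 1) * matchings_count (k - 2)"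
  by (cases k rule: matchings_count.cases) auto

lemma card_perfect_matchings:
  "finite H \<Longrightarrow> card (perfect_matchings H) = matchings_count (card H)"
proof (induction "card H" arbitrary: H rule: less_induct)
  case less
  show ?case
  proof (cases "H = {}")
    case True
    then have "perfect_matchings H = {id}"
      by (auto simp: perfect_matchings_def)
    then show ?thesis using True by simp
  next
    case False
    then obtain a where a: "a \<in> H" by blast
    have partner_count: "card {m \<in> perfect_matchings H. m a = b} = matchings_count (card H - 2)"
      if b: "b \<in> H - {a}" for b
    proof -
      have "b \<in> H" "a \<noteq> b" using b by auto
      then have card_rest: "card (H - {a,b}) = card H - 2"
        using a less.prems by (simp add: card_Diff_subset_Int)
      have "card {m \<in> perfect_matchings H. m a = b} = card (perfect_matchings (H - {a,b}))"
        using card_perfect_matchings_pair[of a H b "\<lambda>_. True"] a b by auto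
      also have "\<dots> = matchings_count (card H - 2)"
        using less.hyps[of "H - {a,b}"] less.prems card_rest card_Diff2_less[OF less.prems a \<open>b \<in> H\<close>]
        by simp
      finally show ?thesis .
    qed
    have by_partner: "(\<Union>b\<in>H - {a}. {m \<in> perfect_matchings H. m a = b}) = perfect_matchings H"
      using a by (auto dest: perfect_matchingsD)
    have "card (\<Union>b\<in>H - {a}. {m \<in> perfect_matchings H. m a = b})
        = (\<Sum>b\<in>H - {a}. card {m \<in> perfect_matchings H. m a = b})"
      by (rule card_UN_disjoint) (use less.prems finite_perfect_matchings[OF less.prems] in auto)
    then have "card (perfect_matchings H) = (\<Sum>b\<in>H - {a}. card {m \<in> perfect_matchings H. m a = b})"
      by (simp only: by_partner)
    also have "\<dots> = (card H - 1) * matchings_count (card H - 2)"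
      using partner_count a less.prems by simp
    also have "\<dots> = matchings_count (card H)"
      using a less.prems by (cases "card H" rule: matchings_count.cases) auto
    finally show ?thesis .
  qed
qed

definition pair_elems :: "('a \<times> 'a) list \<Rightarrow> 'a list" where
  "pair_elems P = concat (map (\<lambda>(x, y). [x, y]) P)"

lemma pair_elems_simps [simp]:
  "pair_elems [] = []" "pair_elems ((x, y) # P) = x # y # pair_elems P"
  "pair_elems (P @ Q) = pair_elems P @ pair_elems Q"
  by (simp_all add: pair_elems_def)

lemma length_pair_elems [simp]: "length (pair_elems P) = 2 * length P"
  by (induction P) (auto simp: pair_elems_def)

lemma set_pair_elems: "set (pair_elems P) = fst ` set P \<union> snd ` set P"
  by (induction P) (auto simp: pair_elems_def)

definition matches :: "('a \<Rightarrow> 'a) \<Rightarrow> ('a \<times> 'a) list \<Rightarrow> bool" where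
  "matches m P \<longleftrightarrow> (\<forall>(a, b) \<in> set P. m a = b)"

lemma matches_append [simp]: "matches m (P @ Q) \<longleftrightarrow> matches m P \<and> matches m Q"
  by (simp add: matches_def ball_Un)

lemma matches_Cons [simp]: "matches m ((a, b) # P) \<longleftrightarrow> m a = b \<and> matches m P"
  by (simp add: matches_def)

lemma matches_Nil [simp]: "matches m []"
  by (simp add: matches_def)

lemma matches_subset: "matches m P \<Longrightarrow> set Q \<subseteq> set P \<Longrightarrow> matches m Q"
  unfolding matches_def by auto

lemma card_perfect_matchings_matches:
  assumes "finite H" "distinct (pair_elems P)" "set (pair_elems P) \<subseteq> H"
  shows "card {m \<in> perfect_matchings H. matches m P} = matchings_count (card H - 2 * length P)"
  using assms
proof (induction P arbitrary: H)
  case Nil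
  then show ?case using card_perfect_matchings by simp
next
  case (Cons q P)
  obtain a b where q: "q = (a, b)" by (cases q)
  have fresh: "a \<noteq> b" "a \<notin> set (pair_elems P)" "b \<notin> set (pair_elems P)"
    using Cons.prems(2) q by auto
  have in_H: "a \<in> H" "b \<in> H" using Cons.prems(3) q by auto
  have agree_matches: "matches m P = matches m' P" if agree: "\<And>x. x \<noteq> a \<Longrightarrow> x \<noteq> b \<Longrightarrow> m x = m' x" for m m'
  proof -
    have "m x = m' x" if "(x, y) \<in> set P" for x y
      using that fresh agree[of x] unfolding set_pair_elems by force
    then show ?thesis unfolding matches_def by auto
  qed
  then have "card {m \<in> perfect_matchings H. m a = b \<and> matches m P}
      = card {m \<in> perfect_matchings (H - {a,b}). matches m P}"
    by (rule card_perfect_matchings_pair[OF in_H fresh(1)]) (use agree_matches in blast)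
  also have "\<dots> = matchings_count (card (H - {a,b}) - 2 * length P)"
    using Cons.prems fresh q by (intro Cons.IH) auto
  also have "card (H - {a,b}) = card H - 2"
    using in_H fresh Cons.prems(1) by (simp add: card_Diff_subset_Int)
  finally show ?case using q by simp
qed

lemma matchings_count_unfold:
  assumes "even l" "2 * (k + 1) \<le> l"
  shows "real (matchings_count l)
    = real (l - 1) * (\<Prod>i<k. real (l - 2 * i - 3)) * real (matchings_count (l - 2 * (k + 1)))"
  using assms(2)
proof (induction k)
  case 0
  then show ?case using matchings_count_rec[of l] by simp
next
  case (Suc k)
  define j where "j = l - 2 * (Suc k + 1)"
  have "l - 2 * (k + 1) = Suc (Suc j)" "l - 2 * k - 3 = Suc j"
    unfolding j_def using Suc.prems by simp_all
  then have rec: "matchings_count (l - 2 * (k + 1)) = (l - 2 * k - 3) * matchings_count j"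
    by simp
  have "real (matchings_count l)
      = real (l - 1) * (\<Prod>i<k. real (l - 2 * i - 3)) * real (matchings_count (l - 2 * (k + 1)))"
    using Suc by simp
  also have "\<dots> = real (l - 1) * ((\<Prod>i<k. real (l - 2 * i - 3)) * real (l - 2 * k - 3))
      * real (matchings_count j)"
    by (simp only: rec of_nat_mult mult.assoc)
  also have "\<dots> = real (l - 1) * (\<Prod>i<Suc k. real (l - 2 * i - 3))
      * real (matchings_count (l - 2 * (Suc k + 1)))"
    by (simp only: prod.lessThan_Suc j_def)
  finally show ?case .
qed

text \<open>Each factor \<open>F - 2 i\<close> counts the ways of extending an exploration path by one step, and
  each step costs a factor \<open>1 / (l - 2 i - 3)\<close> in probability.\<close>

lemma matchings_count_ratio_le:
  fixes l F :: nat and \<rho> :: real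
  assumes "even l" "2 * (k + 1) \<le> l" "0 \<le> \<rho>" "\<rho> \<le> 1"
    and F: "real F \<le> \<rho> * (real l - 3)"
  shows "real (matchings_count (l - 2 * (k + 1))) / real (matchings_count l) * (\<Prod>i<k. real (F - 2 * i))
    \<le> \<rho> ^ k / (real l - 1)"
proof -
  have step: "0 \<le> real (F - 2 * i) / real (l - 2 * i - 3) \<and> real (F - 2 * i) / real (l - 2 * i - 3) \<le> \<rho>"
    if "i \<in> {..<k}" for i
  proof -
    have pos: "0 < real (l - 2 * i - 3)" using that assms(2) by simp
    have "real (F - 2 * i) \<le> \<rho> * real (l - 2 * i - 3)"
    proof (cases "2 * i \<le> F")
      case True
      have "real (F - 2 * i) \<le> \<rho> * (real l - 3) - 2 * real i * \<rho>"
        using True F assms(3,4) mult_left_le[of \<rho> "2 * real i"] by (simp add: of_nat_diff)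
      also have "\<dots> = \<rho> * real (l - 2 * i - 3)"
        using pos by (simp add: of_nat_diff algebra_simps)
      finally show ?thesis .
    qed (use pos assms(3) in simp)
    then have "real (F - 2 * i) / real (l - 2 * i - 3) \<le> \<rho>" using pos by (simp add: divide_le_eq)
    moreover have "0 \<le> real (F - 2 * i) / real (l - 2 * i - 3)" by (intro divide_nonneg_nonneg) simp_all
    ultimately show ?thesis by blast
  qed
  have "real (matchings_count (l - 2 * (k + 1))) / real (matchings_count l) * (\<Prod>i<k. real (F - 2 * i))
      = (\<Prod>i<k. real (F - 2 * i) / real (l - 2 * i - 3)) / real (l - 1)"
    using matchings_count_unfold[OF assms(1,2)] matchings_count_pos[of "l - 2 * (k + 1)"] assms(1,2)
    by (simp add: prod_dividef)
  also have "\<dots> \<le> (\<Prod>i<k. \<rho>) / real (l - 1)"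
  proof (rule divide_right_mono)
    show "(\<Prod>i<k. real (F - 2 * i) / real (l - 2 * i - 3)) \<le> (\<Prod>i<k. \<rho>)"
      by (rule prod_mono) (rule step)
  qed simp
  also have "\<dots> = \<rho> ^ k / (real l - 1)"
    using assms(2) by (simp add: of_nat_diff)
  finally show ?thesis .
qed

section \<open>Exploration paths\<close>

text \<open>\<open>explore_path n d w E a U\<close>: starting at vertex \<open>w\<close>, the path has traversed the pairs
  \<open>(a\<^sub>i, b\<^sub>i)\<close> listed in \<open>E\<close>, visiting the vertex set \<open>U\<close>; it leaves its last vertex
  through the half-edge \<open>a\<close>. Whether the pairs belong to the
  matching is a separate condition (\<open>matches\<close>).\<close>

inductive explore_path :: "nat \<Rightarrow> (nat \<Rightarrow> nat) \<Rightarrow> nat \<Rightarrow> ((nat \<times> nat) \<times> (nat \<times> nat)) list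
    \<Rightarrow> nat \<times> nat \<Rightarrow> nat set \<Rightarrow> bool"
  for n d where
  start: "a \<in> half_edges n d \<Longrightarrow> explore_path n d (fst a) [] a {fst a}"
| step: "explore_path n d w E a U \<Longrightarrow> b \<in> half_edges n d \<Longrightarrow> a' \<in> half_edges n d
    \<Longrightarrow> fst b = fst a' \<Longrightarrow> b \<noteq> a' \<Longrightarrow> fst b \<notin> U
    \<Longrightarrow> explore_path n d w (E @ [(a, b)]) a' (insert (fst b) U)"

definition deg_pairs :: "(nat \<Rightarrow> nat) \<Rightarrow> nat \<Rightarrow> nat" where
  "deg_pairs d v = d v * (d v - 1)"

lemma real_deg_pairs: "real (deg_pairs d v) = real (d v) ^ 2 - real (d v)"
  unfolding deg_pairs_def by (cases "d v") (auto simp: power2_eq_square algebra_simps)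

lemma explore_path_invariants:
  assumes "explore_path n d w E a U"
  shows "distinct (pair_elems E @ [a]) \<and> set (pair_elems E @ [a]) \<subseteq> half_edges n d
    \<and> (\<forall>h \<in> set (pair_elems E @ [a]). fst h \<in> U) \<and> U \<subseteq> {..<n} \<and> finite U
    \<and> card U = length E + 1 \<and> w \<in> U \<and> 2 * length E \<le> (\<Sum>u\<in>U. deg_pairs d u)"
  using assms
proof (induction rule: explore_path.induct)
  case (start a)
  then show ?case by (auto simp: mem_half_edges)
next
  case (step w E a U b a')
  have "snd b \<noteq> snd a'" "snd b < d (fst b)" "snd a' < d (fst b)"
    using step.hyps(2-5) by (auto simp: mem_half_edges prod_eq_iff)
  then have "2 \<le> d (fst b)" by linarith
  then have "2 \<le> deg_pairs d (fst b)"
    unfolding deg_pairs_def using mult_le_mono[of 2 "d (fst b)" 1 "d (fst b) - 1"] by simp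
  moreover have "b \<notin> set (pair_elems E @ [a])" "a' \<notin> set (pair_elems E @ [a])"
    using step.IH step.hyps(4,6) by metis+
  ultimately show ?case
    using step.IH step.hyps by (auto simp: mem_half_edges)
qed

lemma explore_path_distinct:
  assumes "explore_path n d w E a U"
  shows "distinct (pair_elems E @ [a])" "set (pair_elems E @ [a]) \<subseteq> half_edges n d"
  using explore_path_invariants[OF assms] by blast+

lemma explore_path_visited:
  assumes "explore_path n d w E a U"
  shows "finite U" "U \<subseteq> {..<n}" "card U = length E + 1" "w \<in> U" "fst a \<in> U"
  using explore_path_invariants[OF assms] by auto

lemma explore_path_length_le:
  "explore_path n d w E a U \<Longrightarrow> 2 * length E \<le> (\<Sum>u\<in>U. deg_pairs d u)"
  using explore_path_invariants by blast

lemma explore_path_suffix: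
  assumes "explore_path n d w E a U" "u \<in> U"
  shows "\<exists>E' U'. explore_path n d u E' a U' \<and> set E' \<subseteq> set E \<and> U' \<subseteq> U"
  using assms
proof (induction arbitrary: u rule: explore_path.induct)
  case (start a)
  then show ?case using explore_path.start[OF start.hyps] by blast
next
  case (step w E a U b a')
  show ?case
  proof (cases "u = fst b")
    case True
    then show ?thesis
      using explore_path.start[OF step.hyps(3)] step.hyps(4) by (intro exI[of _ "[]"]) auto
  next
    case False
    then obtain E' U' where "explore_path n d u E' a U'" "set E' \<subseteq> set E" "U' \<subseteq> U"
      using step.IH[of u] step.prems by blast
    then show ?thesis
      using explore_path.step[of n d u E' a U' b a'] step.hyps by (intro exI[of _ "E' @ [(a, b)]"]) auto
  qed
qed

lemma explore_path_closing_fresh: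
  assumes "explore_path n d w E a U" "m \<in> perfect_matchings (half_edges n d)" "matches m E"
  shows "m a \<notin> set (pair_elems E @ [a])"
proof
  assume "m a \<in> set (pair_elems E @ [a])"
  have dist: "distinct (pair_elems E @ [a])" and sub: "set (pair_elems E @ [a]) \<subseteq> half_edges n d"
    using explore_path_distinct[OF assms(1)] by blast+
  then have "a \<in> half_edges n d" "a \<notin> set (pair_elems E)" by auto
  then have "m a \<noteq> a" "m (m a) = a" using perfect_matchingsD(2,3)[OF assms(2)] by blast+
  with \<open>m a \<in> set (pair_elems E @ [a])\<close> have "m a \<in> set (pair_elems E)" by simp
  then obtain q where q: "q \<in> set E" "m a = fst q \<or> m a = snd q"
    unfolding set_pair_elems by blast
  have "m (fst q) = snd q" using assms(3) q(1) unfolding matches_def by (cases q) auto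
  moreover have "fst q \<in> set (pair_elems E)" "snd q \<in> set (pair_elems E)"
    using q(1) unfolding set_pair_elems by auto
  moreover have "fst q \<in> half_edges n d"
    using sub \<open>fst q \<in> set (pair_elems E)\<close> by auto
  ultimately have "a = fst q \<or> a = snd q"
    using q(2) \<open>m (m a) = a\<close> perfect_matchingsD(3)[OF assms(2)] by metis
  then show False
    using \<open>a \<notin> set (pair_elems E)\<close> \<open>fst q \<in> set (pair_elems E)\<close> \<open>snd q \<in> set (pair_elems E)\<close>
    by blast
qed

section \<open>Counting exploration paths\<close>

definition paths_of_length ::
    "nat \<Rightarrow> (nat \<Rightarrow> nat) \<Rightarrow> nat \<Rightarrow> nat \<Rightarrow> (((nat \<times> nat) \<times> (nat \<times> nat)) list \<times> (nat \<times> nat) \<times> nat set) set"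
  where "paths_of_length n d w k = {(E, a, U). explore_path n d w E a U \<and> length E = k}"

definition path_steps :: "nat \<Rightarrow> (nat \<Rightarrow> nat) \<Rightarrow> nat set \<Rightarrow> ((nat \<times> nat) \<times> (nat \<times> nat)) set" where
  "path_steps n d U = {(b, a'). b \<in> half_edges n d \<and> a' \<in> half_edges n d \<and> fst b = fst a' \<and> b \<noteq> a'
     \<and> fst b \<notin> U}"

lemma finite_paths_of_length: "finite (paths_of_length n d w k)"
proof -
  let ?H = "half_edges n d"
  have "paths_of_length n d w k \<subseteq> {E. set E \<subseteq> ?H \<times> ?H \<and> length E = k} \<times> ?H \<times> Pow {..<n}"
  proof
    fix x assume "x \<in> paths_of_length n d w k"
    then obtain E a U where x: "x = (E, a, U)" and path: "explore_path n d w E a U" and "length E = k"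
      by (auto simp: paths_of_length_def)
    have "fst ` set E \<union> snd ` set E \<subseteq> ?H"
      using explore_path_distinct(2)[OF path] by (simp add: set_pair_elems)
    then have "set E \<subseteq> ?H \<times> ?H"
      by (metis (no_types) image_subset_iff le_sup_iff mem_Times_iff subsetI)
    then show "x \<in> {E. set E \<subseteq> ?H \<times> ?H \<and> length E = k} \<times> ?H \<times> Pow {..<n}"
      using x \<open>length E = k\<close> explore_path_distinct(2)[OF path] explore_path_visited(2)[OF path] by auto
  qed
  moreover have "finite ({E. set E \<subseteq> ?H \<times> ?H \<and> length E = k} \<times> ?H \<times> Pow {..<n})"
    by (intro finite_cartesian_product finite_lists_length_eq) auto
  ultimately show ?thesis by (rule finite_subset)
qed

lemma finite_path_steps: "finite (path_steps n d U)"
  by (rule finite_subset[of _ "half_edges n d \<times> half_edges n d"]) (auto simp: path_steps_def)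

lemma card_half_edges_at_le: "card {h \<in> half_edges n d. fst h = w} \<le> d w"
proof -
  have "{h \<in> half_edges n d. fst h = w} \<subseteq> {w} \<times> {..<d w}" by (auto simp: half_edges_def)
  then show ?thesis using card_mono[of "{w} \<times> {..<d w}"] by fastforce
qed

lemma card_half_edges_low_degree_le:
  assumes "finite U"
  shows "card {h \<in> half_edges n d. fst h \<in> U \<and> d (fst h) \<le> T} \<le> T * card U"
proof -
  have "{h \<in> half_edges n d. fst h \<in> U \<and> d (fst h) \<le> T} \<subseteq> U \<times> {..<T}" by (auto simp: half_edges_def)
  then show ?thesis
    using assms card_mono[of "U \<times> {..<T}"] by (fastforce simp: card_cartesian_product mult.commute)
qed

lemma card_off_diagonal: "card {(i, j). i < k \<and> j < k \<and> i \<noteq> (j::nat)} = k * (k - 1)"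
proof -
  have "{(i, j). i < k \<and> j < k \<and> i \<noteq> j} = {..<k} \<times> {..<k} - (\<lambda>i. (i, i)) ` {..<k}" by auto
  moreover have "card ((\<lambda>i. (i, i)) ` {..<k}) = k" by (subst card_image) (auto simp: inj_on_def)
  moreover have "(\<lambda>i. (i, i)) ` {..<k} \<subseteq> {..<k} \<times> {..<k}" by auto
  ultimately show ?thesis by (simp add: card_Diff_subset diff_mult_distrib2)
qed

lemma card_path_steps_le: "card (path_steps n d U) \<le> (\<Sum>x\<in>{..<n} - U. deg_pairs d x)"
proof -
  let ?S = "SIGMA x:{..<n} - U. {(i, j). i < d x \<and> j < d x \<and> i \<noteq> j}"
  have "path_steps n d U \<subseteq> (\<lambda>(x, i, j). ((x, i), (x, j))) ` ?S"
  proof clarify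
    fix b a' assume "(b, a') \<in> path_steps n d U"
    then obtain x i j where "b = (x, i)" "a' = (x, j)" "x \<in> {..<n} - U" "i < d x" "j < d x" "i \<noteq> j"
      by (cases b, cases a') (auto simp: path_steps_def half_edges_def)
    then show "(b, a') \<in> (\<lambda>(x, i, j). ((x, i), (x, j))) ` ?S"
      by (intro image_eqI[of _ _ "(x, i, j)"]) auto
  qed
  moreover have "finite ?S" by (auto intro: finite_subset[of _ "{..<d _} \<times> {..<d _}"])
  ultimately have "card (path_steps n d U) \<le> card ?S"
    by (rule surj_card_le[rotated])
  also have "\<dots> = (\<Sum>x\<in>{..<n} - U. deg_pairs d x)"
    by (subst card_SigmaI) (auto simp: card_off_diagonal deg_pairs_def
        intro: finite_subset[of _ "{..<d _} \<times> {..<d _}"])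
  finally show ?thesis .
qed

lemma card_paths_of_length_0: "card (paths_of_length n d w 0) \<le> d w"
proof -
  have "paths_of_length n d w 0 \<subseteq> (\<lambda>a. ([], a, {w})) ` {h \<in> half_edges n d. fst h = w}"
  proof
    fix x assume "x \<in> paths_of_length n d w 0"
    then obtain a U where x: "x = ([], a, U)" and path: "explore_path n d w [] a U"
      by (auto simp: paths_of_length_def)
    from path have "U = {w} \<and> fst a = w \<and> a \<in> half_edges n d"
      by (cases rule: explore_path.cases) auto
    then show "x \<in> (\<lambda>a. ([], a, {w})) ` {h \<in> half_edges n d. fst h = w}"
      using x by auto
  qed
  then have "card (paths_of_length n d w 0) \<le> card {h \<in> half_edges n d. fst h = w}"
    by (rule surj_card_le[rotated]) simp
  then show ?thesis using card_half_edges_at_le[of n d w] by linarith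
qed

lemma card_paths_of_length_Suc:
  "card (paths_of_length n d w (Suc k))
    \<le> card (paths_of_length n d w k) * ((\<Sum>v<n. deg_pairs d v) - 2 * k)"
proof -
  let ?F = "\<Sum>v<n. deg_pairs d v"
  let ?extend = "\<lambda>((E, a, U), (b, a')). (E @ [(a, b)], a', insert (fst b) U)"
  let ?S = "SIGMA x : paths_of_length n d w k. path_steps n d (snd (snd x))"
  have "paths_of_length n d w (Suc k) \<subseteq> ?extend ` ?S"
  proof
    fix x assume "x \<in> paths_of_length n d w (Suc k)"
    then obtain E a U where x: "x = (E, a, U)" and path: "explore_path n d w E a U"
      and "length E = Suc k"
      by (auto simp: paths_of_length_def)
    from path show "x \<in> ?extend ` ?S"
    proof (cases rule: explore_path.cases)
      case (step E' a' U' b)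
      then have "((E', a', U'), (b, a)) \<in> ?S" "x = ?extend ((E', a', U'), (b, a))"
        using x \<open>length E = Suc k\<close> by (auto simp: paths_of_length_def path_steps_def)
      then show ?thesis by blast
    qed (use \<open>length E = Suc k\<close> in simp)
  qed
  then have "card (paths_of_length n d w (Suc k)) \<le> card ?S"
    by (rule surj_card_le[rotated]) (simp add: finite_paths_of_length finite_path_steps)
  also have "\<dots> = (\<Sum>x \<in> paths_of_length n d w k. card (path_steps n d (snd (snd x))))"
    by (simp add: card_SigmaI finite_paths_of_length finite_path_steps)
  also have "\<dots> \<le> (\<Sum>x \<in> paths_of_length n d w k. ?F - 2 * k)"
  proof (rule sum_mono)
    fix x assume "x \<in> paths_of_length n d w k"
    then obtain E a U where x: "x = (E, a, U)" and path: "explore_path n d w E a U" and "length E = k"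
      by (auto simp: paths_of_length_def)
    have "card (path_steps n d U) \<le> ?F - (\<Sum>u\<in>U. deg_pairs d u)"
      using card_path_steps_le[of n d U] explore_path_visited(1,2)[OF path] by (simp add: sum_diff_nat)
    then show "card (path_steps n d (snd (snd x))) \<le> ?F - 2 * k"
      using explore_path_length_le[OF path] \<open>length E = k\<close> x by simp
  qed
  finally show ?thesis by simp
qed

lemma card_paths_of_length_le:
  "card (paths_of_length n d w k) \<le> d w * (\<Prod>i<k. (\<Sum>v<n. deg_pairs d v) - 2 * i)"
proof (induction k)
  case 0
  then show ?case using card_paths_of_length_0 by simp
next
  case (Suc k)
  have "card (paths_of_length n d w (Suc k))
      \<le> card (paths_of_length n d w k) * ((\<Sum>v<n. deg_pairs d v) - 2 * k)"
    by (rule card_paths_of_length_Suc)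
  also have "\<dots> \<le> d w * (\<Prod>i<k. (\<Sum>v<n. deg_pairs d v) - 2 * i) * ((\<Sum>v<n. deg_pairs d v) - 2 * k)"
    using Suc.IH by (rule mult_right_mono) simp
  finally show ?case by (simp add: mult.assoc)
qed

section \<open>Closing paths in a random matching\<close>

text \<open>\<open>R U b\<close> describes where the partner \<open>b = m a\<close> of the last half-edge of a path may lie,
  given the set \<open>U\<close> of visited vertices.\<close>

definition has_closing_path :: "nat \<Rightarrow> (nat \<Rightarrow> nat) \<Rightarrow> nat \<Rightarrow> (nat set \<Rightarrow> nat \<times> nat \<Rightarrow> bool) \<Rightarrow> nat
    \<Rightarrow> ((nat \<times> nat) \<Rightarrow> (nat \<times> nat)) \<Rightarrow> bool" where
  "has_closing_path n d w R k m \<longleftrightarrow>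
     (\<exists>E a U. explore_path n d w E a U \<and> length E = k \<and> matches m E \<and> R U (m a))"

lemma has_closing_path_length:
  assumes "m \<in> perfect_matchings (half_edges n d)" "has_closing_path n d w R k m"
  shows "k < n" "2 * (k + 1) \<le> card (half_edges n d)"
proof -
  obtain E a U where path: "explore_path n d w E a U" and "length E = k" "matches m E"
    using assms(2) unfolding has_closing_path_def by blast
  have "card U \<le> card {..<n}"
    using explore_path_visited(1,2)[OF path] by (intro card_mono) auto
  then show "k < n" using explore_path_visited(3)[OF path] \<open>length E = k\<close> by simp
  have "a \<in> half_edges n d" using explore_path_distinct(2)[OF path] by simp
  then have "m a \<in> half_edges n d" using perfect_matchingsD(1)[OF assms(1)] by blast
  then have "distinct (pair_elems (E @ [(a, m a)]))" "set (pair_elems (E @ [(a, m a)])) \<subseteq> half_edges n d"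
    using explore_path_distinct[OF path] explore_path_closing_fresh[OF path assms(1) \<open>matches m E\<close>]
    by auto
  then show "2 * (k + 1) \<le> card (half_edges n d)"
    using card_mono[OF finite_half_edges] distinct_card \<open>length E = k\<close>
    by (metis length_pair_elems length_append_singleton Suc_eq_plus1)
qed

lemma card_matchings_closing_given_path_le:
  assumes R: "\<And>U. finite U \<Longrightarrow> card {b \<in> half_edges n d. R U b} \<le> c (card U)"
    and path: "explore_path n d w E a U" "length E = k"
  shows "card (\<Union>b \<in> {b \<in> half_edges n d. R U b \<and> b \<notin> set (pair_elems E @ [a])}.
      {m \<in> perfect_matchings (half_edges n d). matches m (E @ [(a, b)])})
    \<le> c (k + 1) * matchings_count (card (half_edges n d) - 2 * (k + 1))"
proof -
  let ?H = "half_edges n d"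
  let ?B = "{b \<in> ?H. R U b \<and> b \<notin> set (pair_elems E @ [a])}"
  let ?G = "matchings_count (card ?H - 2 * (k + 1))"
  have each: "card {m \<in> perfect_matchings ?H. matches m (E @ [(a, b)])} = ?G" if "b \<in> ?B" for b
  proof -
    have "distinct (pair_elems (E @ [(a, b)]))" "set (pair_elems (E @ [(a, b)])) \<subseteq> ?H"
      using that explore_path_distinct[OF path(1)] by auto
    from card_perfect_matchings_matches[OF finite_half_edges this] show ?thesis using path(2) by simp
  qed
  have "card (\<Union>b \<in> ?B. {m \<in> perfect_matchings ?H. matches m (E @ [(a, b)])})
      \<le> (\<Sum>b \<in> ?B. card {m \<in> perfect_matchings ?H. matches m (E @ [(a, b)])})"
    by (rule card_UN_le) simp
  also have "\<dots> = card ?B * ?G" using each by simp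
  also have "card ?B \<le> card {b \<in> ?H. R U b}" by (intro card_mono) auto
  also have "card {b \<in> ?H. R U b} \<le> c (k + 1)"
    using R[of U] explore_path_visited(1,3)[OF path(1)] path(2) by simp
  finally show ?thesis by (simp add: mult_right_mono)
qed

lemma card_closing_path_matchings_le:
  assumes R: "\<And>U. finite U \<Longrightarrow> card {b \<in> half_edges n d. R U b} \<le> c (card U)"
  shows "card {m \<in> perfect_matchings (half_edges n d). has_closing_path n d w R k m}
    \<le> card (paths_of_length n d w k) * c (k + 1) * matchings_count (card (half_edges n d) - 2 * (k + 1))"
proof -
  let ?A = "perfect_matchings (half_edges n d)"
  let ?G = "matchings_count (card (half_edges n d) - 2 * (k + 1))"
  let ?closed = "\<lambda>(E, a, U). \<Union>b \<in> {b \<in> half_edges n d. R U b \<and> b \<notin> set (pair_elems E @ [a])}.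
      {m \<in> ?A. matches m (E @ [(a, b)])}"
  have "{m \<in> ?A. has_closing_path n d w R k m} \<subseteq> (\<Union>x \<in> paths_of_length n d w k. ?closed x)"
  proof clarify
    fix m assume m: "m \<in> ?A" "has_closing_path n d w R k m"
    then obtain E a U where path: "explore_path n d w E a U" "length E = k" "matches m E" "R U (m a)"
      unfolding has_closing_path_def by blast
    then have "(E, a, U) \<in> paths_of_length n d w k" "m \<in> ?closed (E, a, U)"
      using m(1) perfect_matchingsD(1)[OF m(1)] explore_path_distinct(2)[OF path(1)]
        explore_path_closing_fresh[OF path(1) m(1) path(3)]
      by (auto simp: paths_of_length_def)
    then show "m \<in> (\<Union>x \<in> paths_of_length n d w k. ?closed x)" by blast
  qed
  moreover have "finite (\<Union>x \<in> paths_of_length n d w k. ?closed x)"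
    by (rule finite_subset[of _ ?A]) (auto simp: finite_perfect_matchings)
  ultimately have "card {m \<in> ?A. has_closing_path n d w R k m} \<le> card (\<Union>x \<in> paths_of_length n d w k. ?closed x)"
    by (simp add: card_mono)
  also have "\<dots> \<le> (\<Sum>x \<in> paths_of_length n d w k. card (?closed x))"
    by (rule card_UN_le[OF finite_paths_of_length])
  also have "\<dots> \<le> (\<Sum>x \<in> paths_of_length n d w k. c (k + 1) * ?G)"
    using card_matchings_closing_given_path_le[where R = R and c = c, OF R]
    by (intro sum_mono) (auto simp: paths_of_length_def)
  finally show ?thesis by (simp add: ac_simps)
qed

definition cycle_through :: "nat \<Rightarrow> (nat \<Rightarrow> nat) \<Rightarrow> nat \<Rightarrow> ((nat \<times> nat) \<Rightarrow> (nat \<times> nat)) \<Rightarrow> bool" where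
  "cycle_through n d w m \<longleftrightarrow> (\<exists>k. has_closing_path n d w (\<lambda>U b. fst b = w) k m)"

definition closes_at_low_degree ::
    "nat \<Rightarrow> (nat \<Rightarrow> nat) \<Rightarrow> nat \<Rightarrow> nat \<Rightarrow> ((nat \<times> nat) \<Rightarrow> (nat \<times> nat)) \<Rightarrow> bool" where
  "closes_at_low_degree n d T v m \<longleftrightarrow> (\<exists>k. has_closing_path n d v (\<lambda>U b. fst b \<in> U \<and> d (fst b) \<le> T) k m)"

lemma sum_lessThan_le_sums:
  fixes f :: "nat \<Rightarrow> real"
  assumes "f sums s" "\<And>k. 0 \<le> f k"
  shows "(\<Sum>k<N. f k) \<le> s"
  using sum_le_suminf[OF sums_summable[OF assms(1)], of "{..<N}"] assms(2) sums_unique[OF assms(1)]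
  by simp

text \<open>The last assumption is the finite-size form of \<open>\<nu> < 1\<close>.\<close>

locale subcritical_degrees =
  fixes n :: nat and d :: "nat \<Rightarrow> nat" and \<rho> :: real
  assumes even_half_edges: "even (card (half_edges n d))"
    and two_le_half_edges: "2 \<le> card (half_edges n d)"
    and rho_nonneg: "0 \<le> \<rho>"
    and rho_less_one: "\<rho> < 1"
    and deg_pairs_le: "real (\<Sum>v<n. deg_pairs d v) \<le> \<rho> * (real (card (half_edges n d)) - 3)"
begin

lemma perfect_matchings_nonempty: "perfect_matchings (half_edges n d) \<noteq> {}"
  using card_perfect_matchings[OF finite_half_edges] matchings_count_pos[OF even_half_edges]
  by (metis card.empty less_irrefl)

lemma set_pmf_CM: "set_pmf (CM n d) = perfect_matchings (half_edges n d)"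
  unfolding CM_def by (simp add: perfect_matchings_nonempty finite_perfect_matchings)

lemma prob_CM:
  "measure_pmf.prob (CM n d) S
    = real (card {m \<in> perfect_matchings (half_edges n d). m \<in> S}) / real (matchings_count (card (half_edges n d)))"
  unfolding CM_def
  by (simp add: measure_pmf_of_set perfect_matchings_nonempty finite_perfect_matchings
      card_perfect_matchings Int_def)

lemma prob_closing_path_le:
  assumes R: "\<And>U. finite U \<Longrightarrow> card {b \<in> half_edges n d. R U b} \<le> c (card U)"
  shows "measure_pmf.prob (CM n d) {m. has_closing_path n d w R k m}
    \<le> real (d w) * real (c (k + 1)) * \<rho> ^ k / (real (card (half_edges n d)) - 1)"
proof (cases "2 * (k + 1) \<le> card (half_edges n d)")
  case True
  define l where "l = card (half_edges n d)"
  define F where "F = (\<Sum>v<n. deg_pairs d v)"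
  let ?G = "matchings_count (l - 2 * (k + 1))"
  have paths: "real (card (paths_of_length n d w k)) \<le> real (d w) * (\<Prod>i<k. real (F - 2 * i))"
    using card_paths_of_length_le[of n d w k] unfolding F_def of_nat_prod[symmetric] of_nat_mult[symmetric]
    by (simp only: of_nat_le_iff)
  have "real (card {m \<in> perfect_matchings (half_edges n d). m \<in> {m. has_closing_path n d w R k m}})
      \<le> real (card (paths_of_length n d w k) * c (k + 1) * ?G)"
    using card_closing_path_matchings_le[where R = R and c = c and w = w and k = k, OF R]
    unfolding l_def by (simp only: mem_Collect_eq of_nat_le_iff)
  then have "measure_pmf.prob (CM n d) {m. has_closing_path n d w R k m}
      \<le> real (card (paths_of_length n d w k) * c (k + 1) * ?G) / real (matchings_count l)"
    unfolding prob_CM l_def by (rule divide_right_mono) simp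
  also have "\<dots> \<le> real (d w) * real (c (k + 1)) * (real ?G / real (matchings_count l) * (\<Prod>i<k. real (F - 2 * i)))"
    using mult_right_mono[OF paths, of "real (c (k + 1)) * real ?G / real (matchings_count l)"]
    by (simp add: ac_simps)
  also have "\<dots> \<le> real (d w) * real (c (k + 1)) * (\<rho> ^ k / (real l - 1))"
    using True even_half_edges rho_nonneg rho_less_one deg_pairs_le
    by (intro mult_left_mono matchings_count_ratio_le) (simp_all add: l_def F_def)
  finally show ?thesis by (simp add: l_def)
next
  case False
  then have none: "{m \<in> perfect_matchings (half_edges n d). m \<in> {m. has_closing_path n d w R k m}} = {}"
    using has_closing_path_length(2) by fastforce
  have "0 \<le> real (d w) * real (c (k + 1)) * \<rho> ^ k / (real (card (half_edges n d)) - 1)"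
    using rho_nonneg two_le_half_edges by simp
  then show ?thesis unfolding prob_CM none by simp
qed

lemma prob_some_closing_path_le:
  assumes R: "\<And>U. finite U \<Longrightarrow> card {b \<in> half_edges n d. R U b} \<le> c (card U)"
  shows "measure_pmf.prob (CM n d) {m. \<exists>k. has_closing_path n d w R k m}
    \<le> (\<Sum>k<n. real (d w) * real (c (k + 1)) * \<rho> ^ k) / (real (card (half_edges n d)) - 1)"
proof -
  have "measure_pmf.prob (CM n d) {m. \<exists>k. has_closing_path n d w R k m}
      = measure_pmf.prob (CM n d) (\<Union>k<n. {m. has_closing_path n d w R k m})"
    by (rule measure_eq_AE) (auto simp: AE_measure_pmf_iff set_pmf_CM dest: has_closing_path_length(1))
  also have "\<dots> \<le> (\<Sum>k<n. measure_pmf.prob (CM n d) {m. has_closing_path n d w R k m})"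
    by (rule measure_pmf.finite_measure_subadditive_finite) auto
  also have "\<dots> \<le> (\<Sum>k<n. real (d w) * real (c (k + 1)) * \<rho> ^ k / (real (card (half_edges n d)) - 1))"
    by (intro sum_mono prob_closing_path_le R)
  finally show ?thesis by (simp add: sum_divide_distrib)
qed

lemma prob_cycle_through_le:
  "measure_pmf.prob (CM n d) {m. cycle_through n d w m}
    \<le> real (d w) ^ 2 / ((real (card (half_edges n d)) - 1) * (1 - \<rho>))"
proof -
  have "measure_pmf.prob (CM n d) {m. cycle_through n d w m}
      \<le> (\<Sum>k<n. real (d w) * real (d w) * \<rho> ^ k) / (real (card (half_edges n d)) - 1)"
    unfolding cycle_through_def using card_half_edges_at_le
    by (intro prob_some_closing_path_le[where c = "\<lambda>_. d w"])
  also have "(\<Sum>k<n. real (d w) * real (d w) * \<rho> ^ k) \<le> real (d w) ^ 2 * (1 / (1 - \<rho>))"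
  proof -
    have "(\<Sum>k<n. \<rho> ^ k) \<le> 1 / (1 - \<rho>)"
      using rho_nonneg rho_less_one by (intro sum_lessThan_le_sums geometric_sums) auto
    then have "real (d w) ^ 2 * (\<Sum>k<n. \<rho> ^ k) \<le> real (d w) ^ 2 * (1 / (1 - \<rho>))"
      by (rule mult_left_mono) simp
    then show ?thesis by (simp add: sum_distrib_left power2_eq_square mult.assoc)
  qed
  finally show ?thesis
    using two_le_half_edges by (simp add: divide_right_mono ac_simps)
qed

lemma prob_closes_at_low_degree_le:
  "measure_pmf.prob (CM n d) {m. closes_at_low_degree n d T v m}
    \<le> real (d v) * real T / ((real (card (half_edges n d)) - 1) * (1 - \<rho>) ^ 2)"
proof -
  have "measure_pmf.prob (CM n d) {m. closes_at_low_degree n d T v m}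
      \<le> (\<Sum>k<n. real (d v) * real (T * (k + 1)) * \<rho> ^ k) / (real (card (half_edges n d)) - 1)"
    unfolding closes_at_low_degree_def using card_half_edges_low_degree_le
    by (intro prob_some_closing_path_le[where c = "\<lambda>j. T * j"])
  also have "(\<Sum>k<n. real (d v) * real (T * (k + 1)) * \<rho> ^ k)
      = real (d v) * real T * (\<Sum>k<n. real (Suc k) * \<rho> ^ k)"
    by (simp add: sum_distrib_left algebra_simps)
  also have "\<dots> \<le> real (d v) * real T * (1 / (1 - \<rho>) ^ 2)"
    using rho_nonneg rho_less_one
    by (intro mult_left_mono sum_lessThan_le_sums geometric_deriv_sums) auto
  finally show ?thesis
    using two_le_half_edges by (simp add: divide_right_mono ac_simps)
qed

end

section \<open>Non-tree components contain closing paths\<close>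

lemma adj_iff: "(x, y) \<in> adj n d m \<longleftrightarrow> (\<exists>h \<in> half_edges n d. fst h = x \<and> fst (m h) = y)"
proof
  assume "(x, y) \<in> adj n d m"
  then obtain i j where "(x, i) \<in> half_edges n d" "m (x, i) = (y, j)" unfolding adj_def by blast
  then show "\<exists>h \<in> half_edges n d. fst h = x \<and> fst (m h) = y" by force
next
  assume "\<exists>h \<in> half_edges n d. fst h = x \<and> fst (m h) = y"
  then obtain i where "(x, i) \<in> half_edges n d" "fst (m (x, i)) = y" by force
  then show "(x, y) \<in> adj n d m" unfolding adj_def by (cases "m (x, i)") auto
qed

lemma mem_component_iff: "w \<in> component n d m v \<longleftrightarrow> (\<exists>k. (v, w) \<in> adj n d m ^^ k)"
  unfolding component_def by (simp add: rtrancl_power)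

locale matched_component =
  fixes n :: nat and d :: "nat \<Rightarrow> nat" and m :: "nat \<times> nat \<Rightarrow> nat \<times> nat" and v :: nat
  assumes matching: "m \<in> perfect_matchings (half_edges n d)"
begin

abbreviation "Comp \<equiv> component n d m v"

definition dist :: "nat \<Rightarrow> nat" where
  "dist w = (LEAST k. (v, w) \<in> adj n d m ^^ k)"

lemma relpow_dist: "w \<in> Comp \<Longrightarrow> (v, w) \<in> adj n d m ^^ dist w"
  unfolding dist_def mem_component_iff by (rule LeastI_ex)

lemma dist_le: "(v, w) \<in> adj n d m ^^ k \<Longrightarrow> dist w \<le> k"
  unfolding dist_def by (rule Least_le)

lemma root_in_comp: "v \<in> Comp"
  unfolding component_def by simp

lemma dist_root: "dist v = 0"
  using dist_le[of v 0] by simp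

lemma dist_eq_0D: "w \<in> Comp \<Longrightarrow> dist w = 0 \<Longrightarrow> w = v"
  using relpow_dist by fastforce

lemma partner_in_comp:
  assumes "h \<in> half_edges n d" "fst h \<in> Comp"
  shows "fst (m h) \<in> Comp" "dist (fst (m h)) \<le> dist (fst h) + 1"
proof -
  have "(fst h, fst (m h)) \<in> adj n d m" using assms(1) adj_iff by blast
  then have "(v, fst (m h)) \<in> adj n d m ^^ Suc (dist (fst h))"
    using relpow_dist[OF assms(2)] by auto
  then show "fst (m h) \<in> Comp" "dist (fst (m h)) \<le> dist (fst h) + 1"
    unfolding mem_component_iff using dist_le by (blast, fastforce)
qed

lemma comp_subset: "Comp \<subseteq> insert v {..<n}"
proof
  fix w assume "w \<in> Comp"
  then obtain k where "(v, w) \<in> adj n d m ^^ k" using mem_component_iff by blast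
  then show "w \<in> insert v {..<n}"
  proof (cases k)
    case (Suc j)
    then obtain u where "(u, w) \<in> adj n d m" using \<open>(v, w) \<in> adj n d m ^^ k\<close> by auto
    then obtain h where h: "h \<in> half_edges n d" "fst (m h) = w" using adj_iff by blast
    then show ?thesis using perfect_matchingsD(1)[OF matching h(1)] by (auto simp: mem_half_edges)
  qed (use \<open>(v, w) \<in> adj n d m ^^ k\<close> in simp)
qed

lemma parent_exists:
  assumes "w \<in> Comp" "w \<noteq> v"
  shows "\<exists>h \<in> half_edges n d. fst h = w \<and> fst (m h) \<in> Comp \<and> dist (fst (m h)) + 1 = dist w"
proof -
  obtain j where j: "dist w = Suc j" using dist_eq_0D[OF assms(1)] assms(2) by (cases "dist w") auto
  then obtain u where u: "(v, u) \<in> adj n d m ^^ j" "(u, w) \<in> adj n d m"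
    using relpow_dist[OF assms(1)] by auto
  then obtain h where h: "h \<in> half_edges n d" "fst h = u" "fst (m h) = w" using adj_iff by blast
  have "u \<in> Comp" using u(1) mem_component_iff by blast
  then have "dist u = j" using dist_le[OF u(1)] partner_in_comp[OF h(1)] h j by fastforce
  then show ?thesis
    using h \<open>u \<in> Comp\<close> j perfect_matchingsD(1,3)[OF matching h(1)] by (intro bexI[of _ "m h"]) auto
qed

text \<open>The half-edge by which \<open>w\<close> hangs from its parent in a breadth-first search tree of the
  component, rooted at \<open>v\<close>.\<close>

definition parent_half_edge :: "nat \<Rightarrow> nat \<times> nat" where
  "parent_half_edge w =
     (SOME h. h \<in> half_edges n d \<and> fst h = w \<and> fst (m h) \<in> Comp \<and> dist (fst (m h)) + 1 = dist w)"

lemma parent_half_edge: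
  assumes "w \<in> Comp" "w \<noteq> v"
  shows "parent_half_edge w \<in> half_edges n d" "fst (parent_half_edge w) = w"
    "fst (m (parent_half_edge w)) \<in> Comp" "dist (fst (m (parent_half_edge w))) + 1 = dist w"
  using someI_ex[OF parent_exists[OF assms, unfolded Bex_def]] unfolding parent_half_edge_def by blast+

lemma partner_ne_parent_half_edge:
  assumes "x \<in> Comp" "x \<noteq> v" "fst (m (parent_half_edge x)) \<noteq> v"
  shows "m (parent_half_edge x) \<noteq> parent_half_edge (fst (m (parent_half_edge x)))"
proof
  let ?p = "fst (m (parent_half_edge x))"
  assume eq: "m (parent_half_edge x) = parent_half_edge ?p"
  have "m (m (parent_half_edge x)) = parent_half_edge x"
    using perfect_matchingsD(3)[OF matching parent_half_edge(1)[OF assms(1,2)]] .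
  then have "fst (m (parent_half_edge ?p)) = x" using eq parent_half_edge(2)[OF assms(1,2)] by simp
  then show False
    using parent_half_edge(4)[OF assms(1,2)] parent_half_edge(3,4)[OF _ assms(3)] parent_half_edge(3)[OF assms(1,2)]
    by force
qed

lemma explore_path_down:
  assumes "x \<in> Comp" "a \<in> half_edges n d" "fst a = x" "x \<noteq> v \<Longrightarrow> a \<noteq> parent_half_edge x"
  shows "\<exists>E U. explore_path n d v E a U \<and> matches m E \<and> (\<forall>u\<in>U. dist u \<le> dist x)"
  using assms
proof (induction "dist x" arbitrary: x a)
  case 0
  then have "x = v" using dist_eq_0D[of x] by simp
  then show ?case
    using explore_path.start[OF 0(3)] 0(4) dist_root by (intro exI[of _ "[]"] exI[of _ "{v}"]) auto
next
  case (Suc j)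
  have "x \<noteq> v" using Suc.hyps(2) dist_root by auto
  define h where "h = parent_half_edge x"
  define p where "p = fst (m h)"
  have h: "h \<in> half_edges n d" "fst h = x" "p \<in> Comp" "dist p = j"
    using parent_half_edge[OF Suc.prems(1) \<open>x \<noteq> v\<close>] Suc.hyps(2) unfolding h_def p_def by auto
  have mh: "m h \<in> half_edges n d" "m (m h) = h"
    using perfect_matchingsD(1,3)[OF matching h(1)] by auto
  have "p \<noteq> v \<Longrightarrow> m h \<noteq> parent_half_edge p"
    using partner_ne_parent_half_edge[OF Suc.prems(1) \<open>x \<noteq> v\<close>] unfolding h_def p_def by blast
  then obtain E U where path: "explore_path n d v E (m h) U" "matches m E" "\<forall>u\<in>U. dist u \<le> dist p"
    using Suc.hyps(1)[OF h(4)[symmetric] h(3) mh(1)] p_def by blast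
  have "x \<notin> U" using path(3) h(4) Suc.hyps(2) by fastforce
  then have "explore_path n d v (E @ [(m h, h)]) a (insert x U)"
    using explore_path.step[OF path(1) h(1) Suc.prems(2)] h(2) Suc.prems(3,4) \<open>x \<noteq> v\<close> h_def by simp
  moreover have "matches m (E @ [(m h, h)])" using path(2) mh(2) by simp
  ultimately show ?case using path(3) h(4) Suc.hyps(2) by (intro exI) auto
qed

text \<open>Climbing the search tree from \<open>y\<close> must re-enter the visited set, at the latest at the
  root \<open>v\<close>.\<close>

lemma closing_path_up:
  assumes "y \<in> Comp" "y \<noteq> v" "explore_path n d v E (parent_half_edge y) U" "matches m E"
  shows "\<exists>E' a' U'. explore_path n d v E' a' U' \<and> matches m E' \<and> fst (m a') \<in> U'"
  using assms
proof (induction "dist y" arbitrary: y E U)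
  case 0
  then show ?case using dist_eq_0D[of y] by simp
next
  case (Suc j)
  define p where "p = fst (m (parent_half_edge y))"
  show ?case
  proof (cases "p \<in> U")
    case True
    then show ?thesis using Suc.prems(3,4) p_def by blast
  next
    case False
    have "p \<noteq> v" using False explore_path_visited(4)[OF Suc.prems(3)] by auto
    have p: "p \<in> Comp" "dist p = j"
      using parent_half_edge[OF Suc.prems(1,2)] Suc.hyps(2) unfolding p_def by auto
    have "explore_path n d v (E @ [(parent_half_edge y, m (parent_half_edge y))])
        (parent_half_edge p) (insert p U)"
      unfolding p_def
      by (rule explore_path.step[OF Suc.prems(3)])
        (use False p_def perfect_matchingsD(1)[OF matching parent_half_edge(1)[OF Suc.prems(1,2)]]
          parent_half_edge(1,2)[OF p(1) \<open>p \<noteq> v\<close>] partner_ne_parent_half_edge[OF Suc.prems(1,2)]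
          \<open>p \<noteq> v\<close> in auto)
    moreover have "matches m (E @ [(parent_half_edge y, m (parent_half_edge y))])"
      using Suc.prems(4) by simp
    ultimately show ?thesis
      using Suc.hyps(1)[OF p(2)[symmetric] p(1) \<open>p \<noteq> v\<close>] by blast
  qed
qed

definition tree_edges :: "(nat \<times> nat) set set" where
  "tree_edges = (\<lambda>w. {parent_half_edge w, m (parent_half_edge w)}) ` (Comp - {v})"

lemma finite_Comp: "finite Comp"
  using comp_subset finite_subset by blast

lemma card_tree_edges: "card tree_edges = card Comp - 1"
proof -
  have "inj_on (\<lambda>w. {parent_half_edge w, m (parent_half_edge w)}) (Comp - {v})"
  proof (rule inj_onI)
    fix w w' assume w: "w \<in> Comp - {v}" and w': "w' \<in> Comp - {v}"
      and eq: "{parent_half_edge w, m (parent_half_edge w)} = {parent_half_edge w', m (parent_half_edge w')}"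
    have fst_w: "fst (parent_half_edge w) = w" and fst_w': "fst (parent_half_edge w') = w'"
      using parent_half_edge(2) w w' by auto
    have "parent_half_edge w = parent_half_edge w'
        \<or> (m (parent_half_edge w) = parent_half_edge w' \<and> m (parent_half_edge w') = parent_half_edge w)"
      using eq unfolding doubleton_eq_iff by argo
    then show "w = w'"
    proof
      assume "parent_half_edge w = parent_half_edge w'"
      then show "w = w'" using fst_w fst_w' by metis
    next
      assume swap: "m (parent_half_edge w) = parent_half_edge w' \<and> m (parent_half_edge w') = parent_half_edge w"
      have "dist w' + 1 = dist w" using parent_half_edge(4)[of w] swap fst_w' w by simp
      moreover have "dist w + 1 = dist w'" using parent_half_edge(4)[of w'] swap fst_w w' by simp
      ultimately show "w = w'" by simp
    qed
  qed
  then show ?thesis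
    unfolding tree_edges_def using root_in_comp finite_Comp by (simp add: card_image card_Diff_singleton)
qed

lemma tree_edges_subset: "tree_edges \<subseteq> edges_in n d m Comp"
proof
  fix e assume "e \<in> tree_edges"
  then obtain w where w: "w \<in> Comp" "w \<noteq> v" and e: "e = {parent_half_edge w, m (parent_half_edge w)}"
    unfolding tree_edges_def by blast
  then show "e \<in> edges_in n d m Comp"
    unfolding edges_in_def using parent_half_edge(1,2)[OF w] e w
    by (intro CollectI exI[of _ "parent_half_edge w"]) simp
qed

text \<open>The \<open>|C| - 1\<close> tree edges are edges of the component, so a component that is not a
  tree has a further edge.\<close>

lemma non_tree_edge:
  assumes "\<not> is_tree_component n d m Comp"
  shows "\<exists>h \<in> half_edges n d. fst h \<in> Comp
    \<and> (\<forall>w \<in> Comp - {v}. h \<noteq> parent_half_edge w \<and> m h \<noteq> parent_half_edge w)"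
proof -
  have "edges_in n d m Comp = (\<lambda>h. {h, m h}) ` {h \<in> half_edges n d. fst h \<in> Comp}"
    unfolding edges_in_def by blast
  then have "finite (edges_in n d m Comp)" by simp
  moreover have "0 < card Comp" using root_in_comp finite_Comp card_gt_0_iff by blast
  ultimately have less: "card tree_edges < card (edges_in n d m Comp)"
    using assms card_mono[OF _ tree_edges_subset] card_tree_edges unfolding is_tree_component_def by linarith
  have "\<not> edges_in n d m Comp \<subseteq> tree_edges"
  proof
    assume "edges_in n d m Comp \<subseteq> tree_edges"
    moreover have "finite tree_edges" unfolding tree_edges_def using finite_Comp by simp
    ultimately have "card (edges_in n d m Comp) \<le> card tree_edges" by (simp add: card_mono)
    then show False using less by simp
  qed
  then obtain e where "e \<in> edges_in n d m Comp" "e \<notin> tree_edges" by blast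
  then obtain h where h: "h \<in> half_edges n d" "fst h \<in> Comp" "e = {h, m h}" "e \<notin> tree_edges"
    unfolding edges_in_def by blast
  have "h \<noteq> parent_half_edge w \<and> m h \<noteq> parent_half_edge w" if "w \<in> Comp - {v}" for w
  proof
    show "h \<noteq> parent_half_edge w" using h(3,4) that unfolding tree_edges_def by blast
    show "m h \<noteq> parent_half_edge w"
    proof
      assume "m h = parent_half_edge w"
      then have "e = {parent_half_edge w, m (parent_half_edge w)}"
        using h(3) perfect_matchingsD(3)[OF matching h(1)] by auto
      then show False using h(4) that unfolding tree_edges_def by blast
    qed
  qed
  then show ?thesis using h(1,2) by blast
qed

lemma nontree_closing_path:
  assumes "\<not> is_tree_component n d m Comp"
  shows "\<exists>E a U. explore_path n d v E a U \<and> matches m E \<and> fst (m a) \<in> U"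
proof -
  obtain h where h: "h \<in> half_edges n d" "fst h \<in> Comp"
    and fresh: "\<And>w. w \<in> Comp - {v} \<Longrightarrow> h \<noteq> parent_half_edge w \<and> m h \<noteq> parent_half_edge w"
    using non_tree_edge[OF assms] by blast
  then obtain E U where path: "explore_path n d v E h U" "matches m E"
    using explore_path_down[OF h(2) h(1) refl] by blast
  define y where "y = fst (m h)"
  show ?thesis
  proof (cases "y \<in> U")
    case True
    then show ?thesis using path y_def by blast
  next
    case False
    then have "y \<noteq> v" using explore_path_visited(4)[OF path(1)] by auto
    have "y \<in> Comp" using partner_in_comp(1)[OF h] y_def by simp
    have "explore_path n d v (E @ [(h, m h)]) (parent_half_edge y) (insert y U)"
      unfolding y_def
      by (rule explore_path.step[OF path(1)])
        (use perfect_matchingsD(1)[OF matching h(1)] parent_half_edge(1,2)[OF \<open>y \<in> Comp\<close> \<open>y \<noteq> v\<close>]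
          fresh[of y] \<open>y \<in> Comp\<close> \<open>y \<noteq> v\<close> False y_def in auto)
    moreover have "matches m (E @ [(h, m h)])" using path(2) by simp
    ultimately show ?thesis using closing_path_up[OF \<open>y \<in> Comp\<close> \<open>y \<noteq> v\<close>] by blast
  qed
qed

end

section \<open>Bounding the vertices in non-tree components\<close>

text \<open>If the vertex where the closing path returns has degree above \<open>T\<close>, the part of the path
  from that vertex on is a cycle through it.\<close>

lemma B_le_closes_at_low_degree:
  assumes m: "m \<in> perfect_matchings (half_edges n d)"
    and no_hub_cycle: "\<And>w. w < n \<Longrightarrow> T < d w \<Longrightarrow> \<not> cycle_through n d w m"
  shows "B n d m \<le> card {v. v < n \<and> closes_at_low_degree n d T v m}"
  unfolding B_def
proof (rule card_mono, simp, clarify)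
  fix v assume "v < n" and non_tree: "\<not> is_tree_component n d m (component n d m v)"
  then obtain E a U where path: "explore_path n d v E a U" "matches m E" "fst (m a) \<in> U"
    using matched_component.nontree_closing_path[OF matched_component.intro[OF m]] by blast
  define z where "z = fst (m a)"
  show "closes_at_low_degree n d T v m"
  proof (cases "d z \<le> T")
    case True
    then show ?thesis
      using path unfolding closes_at_low_degree_def has_closing_path_def z_def by blast
  next
    case False
    obtain E' U' where "explore_path n d z E' a U'" "set E' \<subseteq> set E"
      using explore_path_suffix[OF path(1) path(3)] z_def by blast
    moreover have "matches m E'" using path(2) \<open>set E' \<subseteq> set E\<close> by (rule matches_subset)
    ultimately have "cycle_through n d z m"
      unfolding cycle_through_def has_closing_path_def z_def by blast
    moreover have "z < n"
      using perfect_matchingsD(1)[OF m] explore_path_distinct(2)[OF path(1)] z_def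
      by (auto simp: mem_half_edges)
    ultimately show ?thesis using no_hub_cycle False by simp
  qed
qed

context subcritical_degrees
begin

lemma prob_hub_cycle_le:
  "measure_pmf.prob (CM n d) {m. \<exists>w. w < n \<and> T < d w \<and> cycle_through n d w m}
    \<le> (\<Sum>w | w < n \<and> T < d w. real (d w) ^ 2) / ((real (card (half_edges n d)) - 1) * (1 - \<rho>))"
proof -
  have "{m. \<exists>w. w < n \<and> T < d w \<and> cycle_through n d w m}
      = (\<Union>w \<in> {w. w < n \<and> T < d w}. {m. cycle_through n d w m})" by blast
  then have "measure_pmf.prob (CM n d) {m. \<exists>w. w < n \<and> T < d w \<and> cycle_through n d w m}
      \<le> (\<Sum>w | w < n \<and> T < d w. measure_pmf.prob (CM n d) {m. cycle_through n d w m})"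
    by (simp add: measure_pmf.finite_measure_subadditive_finite)
  also have "\<dots> \<le> (\<Sum>w | w < n \<and> T < d w. real (d w) ^ 2 / ((real (card (half_edges n d)) - 1) * (1 - \<rho>)))"
    by (intro sum_mono prob_cycle_through_le)
  finally show ?thesis by (simp add: sum_divide_distrib)
qed

lemma prob_many_low_degree_closures_le:
  assumes "0 < K"
  shows "measure_pmf.prob (CM n d) {m. K < real (card {v. v < n \<and> closes_at_low_degree n d T v m})}
    \<le> real (card (half_edges n d)) * real T / (K * (real (card (half_edges n d)) - 1) * (1 - \<rho>) ^ 2)"
proof -
  define X where "X m = real (card {v. v < n \<and> closes_at_low_degree n d T v m})" for m
  have X_sum: "X = (\<lambda>m. \<Sum>v<n. indicator {m. closes_at_low_degree n d T v m} m)"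
    by (auto simp: X_def indicator_def sum.If_cases Int_def)
  have "measure_pmf.prob (CM n d) {m. K < X m} \<le> measure_pmf.prob (CM n d) {m \<in> space (CM n d). K \<le> X m}"
    by (intro measure_pmf.finite_measure_mono) auto
  also have "\<dots> \<le> measure_pmf.expectation (CM n d) X / K"
    using assms by (intro integral_Markov_inequality_measure[where A = UNIV])
      (auto simp: integrable_measure_pmf_finite set_pmf_CM finite_perfect_matchings X_def)
  also have "measure_pmf.expectation (CM n d) X
      = (\<Sum>v<n. measure_pmf.prob (CM n d) {m. closes_at_low_degree n d T v m})"
    unfolding X_sum by (subst Bochner_Integration.integral_sum)
      (auto simp: integrable_measure_pmf_finite set_pmf_CM finite_perfect_matchings)
  also have "\<dots> \<le> (\<Sum>v<n. real (d v) * real T / ((real (card (half_edges n d)) - 1) * (1 - \<rho>) ^ 2))"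
    by (intro sum_mono prob_closes_at_low_degree_le)
  also have "\<dots> = real (card (half_edges n d)) * real T / ((real (card (half_edges n d)) - 1) * (1 - \<rho>) ^ 2)"
    by (simp add: card_half_edges sum_divide_distrib[symmetric] sum_distrib_right[symmetric])
  finally show ?thesis
    using assms by (simp add: X_def divide_right_mono divide_divide_eq_left ac_simps)
qed

lemma prob_B_gt_le:
  assumes "0 < K"
  shows "measure_pmf.prob (CM n d) {m. K < real (B n d m)}
    \<le> (\<Sum>w | w < n \<and> T < d w. real (d w) ^ 2) / ((real (card (half_edges n d)) - 1) * (1 - \<rho>))
      + real (card (half_edges n d)) * real T / (K * (real (card (half_edges n d)) - 1) * (1 - \<rho>) ^ 2)"
proof -
  let ?hub = "{m. \<exists>w. w < n \<and> T < d w \<and> cycle_through n d w m}"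
  let ?low = "{m. K < real (card {v. v < n \<and> closes_at_low_degree n d T v m})}"
  have "measure_pmf.prob (CM n d) {m. K < real (B n d m)} \<le> measure_pmf.prob (CM n d) (?hub \<union> ?low)"
  proof (rule measure_pmf.finite_measure_mono_AE)
    show "AE m in CM n d. m \<in> {m. K < real (B n d m)} \<longrightarrow> m \<in> ?hub \<union> ?low"
      unfolding AE_measure_pmf_iff set_pmf_CM
      using B_le_closes_at_low_degree[of _ n d T] by (fastforce simp del: of_nat_le_iff)
  qed simp
  also have "\<dots> \<le> measure_pmf.prob (CM n d) ?hub + measure_pmf.prob (CM n d) ?low"
    by (rule measure_Un_le) simp_all
  finally show ?thesis
    using prob_hub_cycle_le[of T] prob_many_low_degree_closures_le[OF assms, of T] by linarith
qed

lemma prob_B_gt_less: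
  assumes "0 < \<epsilon>" "0 < lp" and half_edges_ge: "lp * real n \<le> real (card (half_edges n d))"
    and hubs: "(\<Sum>w | w < n \<and> T < d w. real (d w) ^ 2) \<le> \<epsilon> * lp * (1 - \<rho>) / 8 * real n"
    and K: "8 * real T / (\<epsilon> * (1 - \<rho>) ^ 2) < K"
  shows "measure_pmf.prob (CM n d) {m. K < real (B n d m)} < \<epsilon>"
proof -
  define l where "l = real (card (half_edges n d))"
  have "2 \<le> l" using two_le_half_edges unfolding l_def by simp
  then have "0 < real n" using card_half_edges[of n d] unfolding l_def by (cases n) auto
  have r: "0 < 1 - \<rho>" "0 < (1 - \<rho>) ^ 2" using rho_less_one by simp_all
  have "0 < K" using K r \<open>0 < \<epsilon>\<close> by (smt (verit) divide_nonneg_pos of_nat_0_le_iff mult_pos_pos)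
  have hub_term: "(\<Sum>w | w < n \<and> T < d w. real (d w) ^ 2) / ((l - 1) * (1 - \<rho>)) \<le> \<epsilon> / 4"
  proof -
    have "(\<Sum>w | w < n \<and> T < d w. real (d w) ^ 2) / ((l - 1) * (1 - \<rho>))
        \<le> (\<epsilon> * lp * (1 - \<rho>) / 8 * real n) / ((lp * real n / 2) * (1 - \<rho>))"
      using hubs half_edges_ge \<open>2 \<le> l\<close> r assms(1,2) \<open>0 < real n\<close> unfolding l_def
      by (intro frac_le mult_right_mono mult_pos_pos) auto
    also have "\<dots> = \<epsilon> / 4" using \<open>0 < real n\<close> assms(2) r by (simp add: field_simps)
    finally show ?thesis .
  qed
  have low_term: "l * real T / (K * (l - 1) * (1 - \<rho>) ^ 2) < \<epsilon> / 4"
  proof -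
    have "l * real T / (K * (l - 1) * (1 - \<rho>) ^ 2) \<le> l * real T / (K * (l / 2) * (1 - \<rho>) ^ 2)"
      using \<open>2 \<le> l\<close> \<open>0 < K\<close> r by (intro divide_left_mono mult_right_mono mult_left_mono mult_pos_pos) auto
    also have "\<dots> = 2 * real T / (K * (1 - \<rho>) ^ 2)" using \<open>2 \<le> l\<close> by (simp add: field_simps)
    also have "\<dots> < \<epsilon> / 4"
      using K \<open>0 < K\<close> r \<open>0 < \<epsilon>\<close> by (simp add: divide_less_eq field_simps)
    finally show ?thesis .
  qed
  show ?thesis
    using prob_B_gt_le[OF \<open>0 < K\<close>, of T] hub_term low_term \<open>0 < \<epsilon>\<close> unfolding l_def by linarith
qed

end

section \<open>Asymptotics under the convergence assumption\<close>

lemma integrable_real_of_integrable_square: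
  "integrable (measure_pmf p) (\<lambda>k. real k ^ 2) \<Longrightarrow> integrable (measure_pmf p) real"
  by (rule Bochner_Integration.integrable_bound)
    (auto simp: power2_eq_square le_square simp flip: of_nat_mult intro!: AE_I2)

lemma pmf_expectation_sums:
  fixes p :: "nat pmf" and f :: "nat \<Rightarrow> real"
  assumes "integrable (measure_pmf p) f"
  shows "(\<lambda>k. pmf p k * f k) sums measure_pmf.expectation p f"
proof -
  have "integrable (count_space UNIV) (\<lambda>k. pmf p k *\<^sub>R f k)"
    using assms unfolding measure_pmf_eq_density by (subst (asm) integrable_density) auto
  moreover have "measure_pmf.expectation p f = integral\<^sup>L (count_space UNIV) (\<lambda>k. pmf p k *\<^sub>R f k)"
    unfolding measure_pmf_eq_density by (subst integral_density) auto
  ultimately show ?thesis using sums_integral_count_space_nat by simp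
qed

lemma tendsto_sum_degrees_below:
  fixes d :: "nat \<Rightarrow> nat \<Rightarrow> nat" and g :: "nat \<Rightarrow> real"
  assumes CA: "\<And>k. (\<lambda>n. real (card {v. v < n \<and> d n v = k}) / real n) \<longlonglongrightarrow> pmf p k"
  shows "(\<lambda>n. (\<Sum>v | v < n \<and> d n v < K. g (d n v)) / real n) \<longlonglongrightarrow> (\<Sum>k<K. g k * pmf p k)"
proof -
  have "(\<Sum>v | v < n \<and> d n v < K. g (d n v)) = (\<Sum>k<K. g k * real (card {v. v < n \<and> d n v = k}))" for n
  proof -
    have "(\<Sum>v | v < n \<and> d n v < K. g (d n v))
        = (\<Sum>k<K. \<Sum>v \<in> {v \<in> {v. v < n \<and> d n v < K}. d n v = k}. g (d n v))"
      by (rule sum.group[symmetric]) auto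
    also have "\<dots> = (\<Sum>k<K. g k * real (card {v. v < n \<and> d n v = k}))"
    proof (rule sum.cong[OF refl])
      fix k assume "k \<in> {..<K}"
      then have "{v \<in> {v. v < n \<and> d n v < K}. d n v = k} = {v. v < n \<and> d n v = k}" by auto
      then show "(\<Sum>v \<in> {v \<in> {v. v < n \<and> d n v < K}. d n v = k}. g (d n v))
          = g k * real (card {v. v < n \<and> d n v = k})" by simp
    qed
    finally show ?thesis .
  qed
  moreover have "(\<lambda>n. \<Sum>k<K. g k * (real (card {v. v < n \<and> d n v = k}) / real n)) \<longlonglongrightarrow> (\<Sum>k<K. g k * pmf p k)"
    by (intro tendsto_sum tendsto_mult_left CA)
  ultimately show ?thesis by (simp add: sum_divide_distrib)
qed

lemma eventually_half_edges_ge: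
  fixes d :: "nat \<Rightarrow> nat \<Rightarrow> nat" and p :: "nat pmf"
  assumes CA: "\<And>k. (\<lambda>n. real (card {v. v < n \<and> d n v = k}) / real n) \<longlonglongrightarrow> pmf p k"
    and "integrable (measure_pmf p) real" and "lp < measure_pmf.expectation p real"
  shows "\<forall>\<^sub>F n in sequentially. lp * real n \<le> real (\<Sum>v<n. d n v)"
proof -
  have "(\<lambda>K. \<Sum>k<K. pmf p k * real k) \<longlonglongrightarrow> measure_pmf.expectation p real"
    using pmf_expectation_sums[OF assms(2)] by (simp add: sums_def)
  from order_tendstoD(1)[OF this assms(3)] obtain K where K: "lp < (\<Sum>k<K. real k * pmf p k)"
    by (auto simp: eventually_sequentially mult.commute)
  have "\<forall>\<^sub>F n in sequentially. lp < (\<Sum>v | v < n \<and> d n v < K. real (d n v)) / real n"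
    using order_tendstoD(1)[OF tendsto_sum_degrees_below[OF CA] K] .
  then show ?thesis
  proof (rule eventually_mono)
    fix n assume "lp < (\<Sum>v | v < n \<and> d n v < K. real (d n v)) / real n"
    moreover have "(\<Sum>v | v < n \<and> d n v < K. real (d n v)) \<le> (\<Sum>v<n. real (d n v))"
      by (rule sum_mono2) auto
    ultimately show "lp * real n \<le> real (\<Sum>v<n. d n v)"
      by (cases "n = 0") (auto simp: less_divide_eq mult.commute)
  qed
qed

lemma eventually_hub_mass_le:
  fixes d :: "nat \<Rightarrow> nat \<Rightarrow> nat" and p :: "nat pmf"
  assumes CA_dist: "\<And>k. (\<lambda>n. real (card {v. v < n \<and> d n v = k}) / real n) \<longlonglongrightarrow> pmf p k"
    and CA_int: "integrable (measure_pmf p) (\<lambda>k. real k ^ 2)"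
    and CA_mom: "(\<lambda>n. (\<Sum>v<n. real (d n v) ^ 2) / real n) \<longlonglongrightarrow> measure_pmf.expectation p (\<lambda>k. real k ^ 2)"
    and "0 < \<delta>"
  obtains T where "\<forall>\<^sub>F n in sequentially. (\<Sum>w | w < n \<and> T < d n w. real (d n w) ^ 2) \<le> \<delta> * real n"
proof -
  let ?S2 = "measure_pmf.expectation p (\<lambda>k. real k ^ 2)"
  have "(\<lambda>K. \<Sum>k<K. pmf p k * real k ^ 2) \<longlonglongrightarrow> ?S2"
    using pmf_expectation_sums[OF CA_int] by (simp add: sums_def)
  from order_tendstoD(1)[OF this, of "?S2 - \<delta>"] obtain T
    where "\<forall>K\<ge>T. ?S2 - \<delta> < (\<Sum>k<K. pmf p k * real k ^ 2)"
    using \<open>0 < \<delta>\<close> by (auto simp: eventually_sequentially)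
  then have T: "?S2 - \<delta> < (\<Sum>k<Suc T. real k ^ 2 * pmf p k)"
    by (simp add: mult.commute del: sum.lessThan_Suc)
  have split: "(\<Sum>w | w < n \<and> T < d n w. real (d n w) ^ 2)
      = (\<Sum>v<n. real (d n v) ^ 2) - (\<Sum>v | v < n \<and> d n v < Suc T. real (d n v) ^ 2)" for n
  proof -
    have "{..<n} = {v. v < n \<and> d n v < Suc T} \<union> {w. w < n \<and> T < d n w}" by auto
    then have "(\<Sum>v<n. real (d n v) ^ 2)
        = (\<Sum>v | v < n \<and> d n v < Suc T. real (d n v) ^ 2) + (\<Sum>w | w < n \<and> T < d n w. real (d n w) ^ 2)"
      by (simp add: sum.union_disjoint[symmetric] disjoint_iff)
    then show ?thesis by simp
  qed
  have "(\<lambda>n. (\<Sum>w | w < n \<and> T < d n w. real (d n w) ^ 2) / real n)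
      \<longlonglongrightarrow> ?S2 - (\<Sum>k<Suc T. real k ^ 2 * pmf p k)"
    unfolding split diff_divide_distrib by (intro tendsto_diff CA_mom tendsto_sum_degrees_below CA_dist)
  then have "\<forall>\<^sub>F n in sequentially. (\<Sum>w | w < n \<and> T < d n w. real (d n w) ^ 2) / real n < \<delta>"
    by (rule order_tendstoD(2)) (use T in simp)
  then have "\<forall>\<^sub>F n in sequentially. (\<Sum>w | w < n \<and> T < d n w. real (d n w) ^ 2) \<le> \<delta> * real n"
    by eventually_elim (auto simp: divide_less_eq split: if_splits)
  then show ?thesis by (rule that)
qed

text \<open>The arithmetic behind \<open>eventually_subcritical\<close>: with \<open>l \<ge> lp n\<close> half-edges and
  \<open>\<Sum> d\<^sub>v\<^sup>2 \<le> (S\<^sub>2 + \<eta>/8) n\<close>, the pairs \<open>\<Sum> d\<^sub>v (d\<^sub>v - 1) = \<Sum> d\<^sub>v\<^sup>2 - l\<close> are at most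
  \<open>\<rho> (l - 3)\<close>.\<close>

lemma deg_pairs_le_arith:
  fixes S l x S2 \<eta> lp \<rho> :: real
  assumes "0 < lp" "0 < \<eta>" "lp * x \<le> l" "S \<le> (S2 + \<eta> / 8) * x" "24 / \<eta> \<le> x" "3 \<le> l"
    and "(S2 + \<eta> / 4) / lp - 1 \<le> \<rho>" "\<rho> < 1" "0 \<le> S2 + \<eta> / 4"
  shows "S - l \<le> \<rho> * (l - 3)"
proof -
  define r where "r = (S2 + \<eta> / 4) / lp - 1"
  have "r * (l - 3) \<le> \<rho> * (l - 3)" using assms(6,7) r_def by (intro mult_right_mono) auto
  moreover have "r * (l - 3) = (S2 + \<eta> / 4) * (l / lp) - l - 3 * r"
    unfolding r_def using assms(1) by (simp add: field_simps)
  moreover have "(S2 + \<eta> / 4) * x \<le> (S2 + \<eta> / 4) * (l / lp)"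
    using assms(1,3,9) by (intro mult_left_mono) (simp_all add: le_divide_eq mult.commute)
  moreover have "3 \<le> (\<eta> / 8) * x"
    using mult_left_mono[OF assms(5), of "\<eta> / 8"] assms(2) by simp
  moreover have "r < 1" using assms(7,8) r_def by simp
  moreover have "S \<le> (S2 + \<eta> / 4) * x - (\<eta> / 8) * x" using assms(4) by (simp add: algebra_simps)
  ultimately show ?thesis by linarith
qed

text \<open>Since \<open>\<nu> < 1\<close> means \<open>E D\<^sup>2 < 2 E D\<close>, a margin \<open>\<eta> = 2 E D - E D\<^sup>2\<close> is available to
  absorb the finite-\<open>n\<close> errors of the first two moments.\<close>

lemma eventually_subcritical:
  fixes d :: "nat \<Rightarrow> nat \<Rightarrow> nat" and p :: "nat pmf"
  assumes CA_dist: "\<And>k. (\<lambda>n. real (card {v. v < n \<and> d n v = k}) / real n) \<longlonglongrightarrow> pmf p k"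
    and CA_int: "integrable (measure_pmf p) (\<lambda>k. real k ^ 2)"
    and CA_mom: "(\<lambda>n. (\<Sum>v<n. real (d n v) ^ 2) / real n) \<longlonglongrightarrow> measure_pmf.expectation p (\<lambda>k. real k ^ 2)"
    and subcritical: "measure_pmf.expectation p (\<lambda>k. real k ^ 2) < 2 * measure_pmf.expectation p real"
  obtains lp \<rho> where "0 < lp" "0 \<le> \<rho>" "\<rho> < 1"
    "\<forall>\<^sub>F n in sequentially. lp * real n \<le> real (\<Sum>v<n. d n v) \<and> 3 \<le> real (\<Sum>v<n. d n v)
       \<and> real (\<Sum>v<n. deg_pairs (d n) v) \<le> \<rho> * (real (\<Sum>v<n. d n v) - 3)"
proof -
  define S2 where "S2 = measure_pmf.expectation p (\<lambda>k. real k ^ 2)"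
  define lam where "lam = measure_pmf.expectation p real"
  define \<eta> where "\<eta> = 2 * lam - S2"
  define lp where "lp = lam - \<eta> / 8"
  define \<rho> where "\<rho> = max 0 ((S2 + \<eta> / 4) / lp - 1)"
  have "0 \<le> S2" unfolding S2_def by (rule integral_nonneg_AE) simp
  moreover have "S2 < 2 * lam" using subcritical unfolding S2_def lam_def .
  ultimately have "0 < \<eta>" "0 < lp" "S2 + \<eta> / 4 < 2 * lp"
    unfolding \<eta>_def lp_def by (auto simp: field_simps)
  then have \<rho>: "0 \<le> \<rho>" "\<rho> < 1" "(S2 + \<eta> / 4) / lp - 1 \<le> \<rho>"
    unfolding \<rho>_def by (auto simp: divide_less_eq)
  have "\<forall>\<^sub>F n in sequentially. lp * real n \<le> real (\<Sum>v<n. d n v)"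
    using \<open>0 < \<eta>\<close> unfolding lp_def lam_def
    by (intro eventually_half_edges_ge[OF CA_dist integrable_real_of_integrable_square[OF CA_int]]) simp
  moreover have "\<forall>\<^sub>F n in sequentially. (\<Sum>v<n. real (d n v) ^ 2) / real n < S2 + \<eta> / 8"
    using CA_mom \<open>0 < \<eta>\<close> unfolding S2_def by (intro order_tendstoD(2)) auto
  moreover have "\<forall>\<^sub>F n in sequentially. max (24 / \<eta>) (3 / lp) \<le> real n"
    using filterlim_real_sequentially unfolding filterlim_at_top by blast
  ultimately have "\<forall>\<^sub>F n in sequentially. lp * real n \<le> real (\<Sum>v<n. d n v) \<and> 3 \<le> real (\<Sum>v<n. d n v)
       \<and> real (\<Sum>v<n. deg_pairs (d n) v) \<le> \<rho> * (real (\<Sum>v<n. d n v) - 3)"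
  proof eventually_elim
    case (elim n)
    define l where "l = real (\<Sum>v<n. d n v)"
    have "3 / lp \<le> real n" "24 / \<eta> \<le> real n" using elim(3) by simp_all
    have "3 \<le> lp * real n"
      using \<open>3 / lp \<le> real n\<close> \<open>0 < lp\<close> by (simp add: divide_le_eq mult.commute)
    then have "0 < real n" by (cases n) auto
    have "3 \<le> l" using elim(1) \<open>3 \<le> lp * real n\<close> unfolding l_def by linarith
    moreover have "(\<Sum>v<n. real (d n v) ^ 2) \<le> (S2 + \<eta> / 8) * real n"
      using elim(2) \<open>0 < real n\<close> by (simp add: divide_less_eq)
    then have "(\<Sum>v<n. real (d n v) ^ 2) - l \<le> \<rho> * (l - 3)"
      using deg_pairs_le_arith[OF \<open>0 < lp\<close> \<open>0 < \<eta>\<close>, of "real n" l] elim(1) \<rho> \<open>3 \<le> l\<close>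
        \<open>24 / \<eta> \<le> real n\<close> \<open>0 \<le> S2\<close> \<open>0 < \<eta>\<close>
      unfolding l_def by simp
    ultimately show ?case
      using elim(1) unfolding l_def by (simp add: real_deg_pairs sum_subtractf)
  qed
  then show ?thesis using that \<open>0 < lp\<close> \<rho>(1,2) by blast
qed

lemma second_moment_less_twice_mean:
  fixes p :: "nat pmf"
  assumes "integrable (measure_pmf p) (\<lambda>k. real k ^ 2)" "0 < measure_pmf.expectation p real"
    and "measure_pmf.expectation p (\<lambda>k. real k * (real k - 1)) / measure_pmf.expectation p real < 1"
  shows "measure_pmf.expectation p (\<lambda>k. real k ^ 2) < 2 * measure_pmf.expectation p real"
proof -
  have "measure_pmf.expectation p (\<lambda>k. real k * (real k - 1))
      = measure_pmf.expectation p (\<lambda>k. real k ^ 2) - measure_pmf.expectation p real"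
    using assms(1) integrable_real_of_integrable_square[OF assms(1)]
    by (simp add: power2_eq_square algebra_simps)
  then show ?thesis using assms(2,3) by (simp add: divide_less_eq)
qed

theorem proposition2:
  fixes d :: "nat \<Rightarrow> nat \<Rightarrow> nat" and p :: "nat pmf" and \<gamma> :: real
  assumes even: "\<And>n. even (\<Sum>v<n. d n v)"
    and CA_dist: "\<And>k. (\<lambda>n. real (card {v. v < n \<and> d n v = k}) / real n) \<longlonglongrightarrow> pmf p k"
    and CA_int: "integrable (measure_pmf p) (\<lambda>k. real k ^ 2)"
    and CA_mom: "(\<lambda>n. (\<Sum>v<n. real (d n v) ^ 2) / real n)
                   \<longlonglongrightarrow> measure_pmf.expectation p (\<lambda>k. real k ^ 2)"
    and lam_pos: "0 < measure_pmf.expectation p real"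
    and nu_pos: "0 < measure_pmf.expectation p (\<lambda>k. real k * (real k - 1))
                        / measure_pmf.expectation p real"
    and nu_lt1: "measure_pmf.expectation p (\<lambda>k. real k * (real k - 1))
                        / measure_pmf.expectation p real < 1"
    and gamma_pos: "\<gamma> > 0"
    and tail: "(\<lambda>k. pmf p k) \<in> O(\<lambda>k. exp (- \<gamma> * real k))"
  shows "\<forall>\<alpha>::real. 0 < \<alpha> \<and> \<alpha> < 1 \<longrightarrow>
           (\<forall>\<epsilon>>0. \<exists>M N. \<forall>n\<ge>N.
              measure_pmf.prob (CM n (d n))
                {m. \<bar>real (B n (d n) m) / real n powr \<alpha>\<bar> > M} < \<epsilon>)"
proof (intro allI impI)
  fix \<alpha> \<epsilon> :: real assume \<alpha>: "0 < \<alpha> \<and> \<alpha> < 1" and "0 < \<epsilon>"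
  obtain lp \<rho> where lp: "0 < lp" and \<rho>: "0 \<le> \<rho>" "\<rho> < 1"
    and subcrit: "\<forall>\<^sub>F n in sequentially. lp * real n \<le> real (\<Sum>v<n. d n v) \<and> 3 \<le> real (\<Sum>v<n. d n v)
       \<and> real (\<Sum>v<n. deg_pairs (d n) v) \<le> \<rho> * (real (\<Sum>v<n. d n v) - 3)"
    by (rule eventually_subcritical[OF CA_dist CA_int CA_mom second_moment_less_twice_mean[OF CA_int lam_pos nu_lt1]])
  have "0 < \<epsilon> * lp * (1 - \<rho>) / 8" using \<open>0 < \<epsilon>\<close> lp \<rho> by simp
  then obtain T where hubs: "\<forall>\<^sub>F n in sequentially.
      (\<Sum>w | w < n \<and> T < d n w. real (d n w) ^ 2) \<le> \<epsilon> * lp * (1 - \<rho>) / 8 * real n"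
    by (rule eventually_hub_mass_le[OF CA_dist CA_int CA_mom])
  have "\<forall>\<^sub>F n in sequentially. 8 * real T / (\<epsilon> * (1 - \<rho>) ^ 2) < real n powr \<alpha>"
    using \<alpha> by real_asymp
  with subcrit hubs have "\<forall>\<^sub>F n in sequentially.
      measure_pmf.prob (CM n (d n)) {m. \<bar>real (B n (d n) m) / real n powr \<alpha>\<bar> > 1} < \<epsilon>"
  proof eventually_elim
    case (elim n)
    interpret subcritical_degrees n "d n" \<rho>
      using even[of n] \<rho> elim(1) by unfold_locales (auto simp: card_half_edges simp del: of_nat_sum)
    have "0 \<le> 8 * real T / (\<epsilon> * (1 - \<rho>) ^ 2)" using \<open>0 < \<epsilon>\<close> by simp
    then have "0 < real n powr \<alpha>" using elim(3) by linarith
    then have "{m. \<bar>real (B n (d n) m) / real n powr \<alpha>\<bar> > 1} = {m. real n powr \<alpha> < real (B n (d n) m)}"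
      by (auto simp: less_divide_eq)
    then show ?case
      using prob_B_gt_less[OF \<open>0 < \<epsilon>\<close> lp, of T "real n powr \<alpha>"] elim by (simp add: card_half_edges)
  qed
  then show "\<exists>M N. \<forall>n\<ge>N. measure_pmf.prob (CM n (d n)) {m. \<bar>real (B n (d n) m) / real n powr \<alpha>\<bar> > M} < \<epsilon>"
    unfolding eventually_sequentially by blast
qed

end
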